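(* Fix $\mathbf{x}'\in\Omega$ and suppose $\lambda\neq1$. Then $$\inf_{\mathbf{F}\in\mathbb{R}^{3\times2},\ \det(\mathbf{F}^T\mathbf{F})=1} W_{3D}\big((\mathbf{x}',0),[\mathbf{F},\mathbf{b}(\mathbf{F})]\big)>0,$$ where for $\mathbf{F}=[\mathbf{F}_1,\mathbf{F}_2]$, $\mathbf{b}(\mathbf{F})=\frac{\mathbf{F}_1\times\mathbf{F}_2}{|\mathbf{F}_1\times\mathbf{F}_2|^2}$ and $[\mathbf{F},\mathbf{b}(\mathbf{F})]\in\mathbb{R}^{3\times3}$ has columns $\mathbf{F}_1,\mathbf{F}_2,\mathbf{b}(\mathbf{F})$.
   Context: Let $\Omega\subset\mathbb{R}^2$ be a bounded Lipschitz domain. At the point $\mathbf{x}'$ we are given scalars $s,s_0$ with $-1<s,s_0<\infty$ and a unit vector $\mathbf{m}\in\mathbb{S}^1\subset\mathbb{R}^2$, identified with $(\mathbf{m},0)^T\in\mathbb{R}^3$ when needed; $\lambda=\big(\tfrac{s+1}{s_0+1}\big)^{1/3}$. For $\mathbf{G}\in\mathbb{R}^{3\times3}$ with $\mathbf{G}\mathbf{m}\neq0$, set $\mathbf{n}=\mathbf{G}\mathbf{m}/|\mathbf{G}\mathbf{m}|$, $\mathbf{L}_{\mathbf{m}}=(s_0+1)^{-1/3}(\mathrm{Id}_3+s_0\,\mathbf{m}\otimes\mathbf{m})$, $\mathbf{L}_{\mathbf{n}}=(s+1)^{-1/3}(\mathrm{Id}_3+s\,\mathbf{n}\otimes\mathbf{n})$,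 and $$W_{3D}\big((\mathbf{x}',0),\mathbf{G}\big)=\operatorname{tr}\big(\mathbf{G}^T\mathbf{L}_{\mathbf{n}}^{-1}\mathbf{G}\mathbf{L}_{\mathbf{m}}\big)-3 .$$ *)

theory Defs
  imports "HOL-Analysis.Analysis" "HOL-Analysis.Cross3"
begin

definition outer3 :: "real^3 \<Rightarrow> real^3 \<Rightarrow> real^3^3" where
  "outer3 a b = (\<chi> i j. a$i * b$j)"

definition emb3 :: "real^2 \<Rightarrow> real^3" where
  "emb3 m = vector [m$1, m$2, 0]"

definition L_mat :: "real \<Rightarrow> real^3 \<Rightarrow> real^3^3" where
  "L_mat t v = ((t + 1) powr (-(1/3))) *\<^sub>R (mat 1 + t *\<^sub>R outer3 v v)"

text \<open>W_3D at the fixed point, with material parameters s, s0 and director m there.\<close>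
definition W3D :: "real \<Rightarrow> real \<Rightarrow> real^2 \<Rightarrow> real^3^3 \<Rightarrow> real" where
  "W3D s s0 m G =
     (let n = (1 / norm (G *v emb3 m)) *\<^sub>R (G *v emb3 m)
      in trace (transpose G ** matrix_inv (L_mat s n) ** G ** L_mat s0 (emb3 m)) - 3)"

definition bvec :: "real^2^3 \<Rightarrow> real^3" where
  "bvec F = (1 / (norm (cross3 (column 1 F) (column 2 F)))\<^sup>2) *\<^sub>R
              cross3 (column 1 F) (column 2 F)"

definition augment :: "real^2^3 \<Rightarrow> real^3 \<Rightarrow> real^3^3" where
  "augment F b = (\<chi> i j. if j = 1 then F$i$1 else if j = 2 then F$i$2 else b$i)"

end

theory Submission
  imports Defs
begin

text \<open>Write \<open>c = F\<^sub>1 \<times> F\<^sub>2\<close>; then \<open>det (F\<^sup>T F) = |c|\<^sup>2 = 1\<close>, so \<open>b(F) = c\<close>.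
  Put \<open>u = F m\<close>, \<open>v = F m\<^sup>\<perp>\<close>, \<open>x = |u|\<^sup>2\<close>, \<open>y = |v|\<^sup>2\<close>. Since \<open>n \<otimes> n\<close> is a projection,
  \<open>L\<^sub>n\<close> is inverted explicitly, and the trace collapses to
  \<open>W + 3 = \<lambda> (1 + ((1 + s\<^sub>0) x + y) / (s + 1) + s / ((s + 1) x))\<close>.
  Lagrange's identity \<open>x y - (u \<bullet> v)\<^sup>2 = |u \<times> v|\<^sup>2 = |c|\<^sup>2 = 1\<close> gives \<open>y \<ge> 1 / x\<close>, hence
  \<open>W + 3 \<ge> \<lambda> + x / \<lambda>\<^sup>2 + \<lambda> / x \<ge> \<lambda> + 2 / \<surd>\<lambda>\<close> by AM-GM, and \<open>\<lambda> + 2 / \<surd>\<lambda> > 3\<close>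
  unless \<open>\<lambda> = 1\<close>.\<close>

lemma matrix_inv_eqI:
  fixes A :: "'a::semiring_1^'n^'m" and B :: "'a^'m^'n"
  assumes "A ** B = mat 1" and "B ** A = mat 1"
  shows "matrix_inv A = B"
proof -
  have "A ** matrix_inv A = mat 1 \<and> matrix_inv A ** A = mat 1"
    unfolding matrix_inv_def using assms by (rule someI[of _ B, OF conjI])
  then have "matrix_inv A = (matrix_inv A ** A) ** B"
    by (metis assms(1) matrix_mul_assoc matrix_mul_rid)
  with \<open>A ** matrix_inv A = mat 1 \<and> matrix_inv A ** A = mat 1\<close> show ?thesis
    by simp
qed

lemma trace_scaleR: "trace (c *\<^sub>R A) = c * trace (A :: real^'n^'n)"
  by (simp add: trace_def sum_distrib_left)

lemma outer3_mult_outer3: "outer3 a b ** outer3 c d = (b \<bullet> c) *\<^sub>R outer3 a d"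
  by (simp add: outer3_def matrix_matrix_mult_def vec_eq_iff inner_vec_def sum_3 algebra_simps)

lemma idempotent_update_mult:
  fixes N :: "real^'n^'n"
  assumes "N ** N = N"
  shows "(mat 1 + a *\<^sub>R N) ** (mat 1 + b *\<^sub>R N) = mat 1 + (a + b + a * b) *\<^sub>R N"
proof -
  have "(A + B) ** C = A ** C + B ** C" for A B C :: "real^'n^'n"
    by (simp add: matrix_matrix_mult_def vec_eq_iff sum.distrib distrib_right)
  then show ?thesis
    by (simp add: matrix_add_ldistrib matrix_scalar_ac flip: scalar_matrix_assoc)
       (simp add: assms algebra_simps)
qed

lemma matrix_inv_L_mat:
  assumes "norm n = 1" and "-1 < t"
  shows "matrix_inv (L_mat t n) = (t + 1) powr (1/3) *\<^sub>R (mat 1 - (t / (t + 1)) *\<^sub>R outer3 n n)"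
proof (rule matrix_inv_eqI)
  define c where "c = (t + 1) powr (1/3)"
  have c: "(t + 1) powr (-(1/3)) * c = 1" "c * (t + 1) powr (-(1/3)) = 1"
    using assms(2) by (simp_all add: c_def powr_minus_divide)
  have "n \<bullet> n = 1" using assms(1) by (simp add: dot_square_norm)
  then have "outer3 n n ** outer3 n n = outer3 n n" by (simp add: outer3_mult_outer3)
  from idempotent_update_mult[OF this]
  have inverse: "(mat 1 + a *\<^sub>R outer3 n n) ** (mat 1 + b *\<^sub>R outer3 n n) = mat 1"
    if "a + b + a * b = 0" for a b using that by simp
  have scaled: "(a *\<^sub>R A) ** (b *\<^sub>R B) = (a * b) *\<^sub>R (A ** B)" for a b and A B :: "real^3^3"
    by (simp add: matrix_scalar_ac flip: scalar_matrix_assoc)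
  have "t + - (t / (t + 1)) + t * - (t / (t + 1)) = 0"
    using assms(2) by (simp add: field_simps)
  then show "L_mat t n ** (c *\<^sub>R (mat 1 - (t / (t + 1)) *\<^sub>R outer3 n n)) = mat 1"
    and "c *\<^sub>R (mat 1 - (t / (t + 1)) *\<^sub>R outer3 n n) ** L_mat t n = mat 1"
    using inverse[of t "- (t / (t + 1))"] inverse[of "- (t / (t + 1))" t]
    by (simp_all add: L_mat_def scaled c)
qed

lemma trace_rank_one_updates:
  fixes G :: "real^3^3"
  shows "trace (transpose G ** (mat 1 + a *\<^sub>R outer3 n n) ** G ** (mat 1 + b *\<^sub>R outer3 e e)) =
    trace (transpose G ** G) + a * (norm (n v* G))\<^sup>2 + b * (norm (G *v e))\<^sup>2
      + a * b * (n \<bullet> (G *v e))\<^sup>2"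
  unfolding power2_norm_eq_inner
  by (simp add: trace_def matrix_matrix_mult_def transpose_def outer3_def mat_def inner_vec_def
      matrix_vector_mult_def vector_matrix_mult_def sum_3 power2_eq_square algebra_simps)

lemma W3D_eq:
  fixes G :: "real^3^3"
  assumes "-1 < s" and "-1 < s0" and u: "u = G *v emb3 m" "u \<noteq> 0"
  shows "W3D s s0 m G = ((s + 1) / (s0 + 1)) powr (1/3) *
    (trace (transpose G ** G) - s / (s + 1) * (norm (u v* G))\<^sup>2 / (norm u)\<^sup>2
      + s0 / (s + 1) * (norm u)\<^sup>2) - 3"
proof -
  define n where "n = (1 / norm u) *\<^sub>R u"
  have "norm n = 1"
    using u(2) by (simp add: n_def)
  have scaled: "trace (transpose G ** (a *\<^sub>R A) ** G ** (b *\<^sub>R B))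
      = a * b * trace (transpose G ** A ** G ** B)" for a b and A B :: "real^3^3"
    by (simp add: matrix_scalar_ac trace_scaleR flip: scalar_matrix_assoc)
  have ratio: "(s + 1) powr (1/3) * (s0 + 1) powr (-(1/3)) = ((s + 1) / (s0 + 1)) powr (1/3)"
    using assms(1,2) by (simp add: powr_minus_divide powr_divide)
  have W: "W3D s s0 m G = ((s + 1) / (s0 + 1)) powr (1/3) *
      trace (transpose G ** (mat 1 + (- (s / (s + 1))) *\<^sub>R outer3 n n) ** G
        ** (mat 1 + s0 *\<^sub>R outer3 (emb3 m) (emb3 m))) - 3"
    unfolding W3D_def Let_def u(1)[symmetric] n_def[symmetric]
      matrix_inv_L_mat[OF \<open>norm n = 1\<close> assms(1)]
    by (simp add: L_mat_def scaled ratio)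
  have nG: "norm (n v* G) = norm (u v* G) / norm u" and nu: "n \<bullet> u = norm u"
    using u(2) by (simp_all add: n_def scaleR_vector_matrix_assoc dot_square_norm power2_eq_square)
  have "trace (transpose G ** (mat 1 + (- (s / (s + 1))) *\<^sub>R outer3 n n) ** G
        ** (mat 1 + s0 *\<^sub>R outer3 (emb3 m) (emb3 m)))
      = trace (transpose G ** G) - s / (s + 1) * (norm (u v* G))\<^sup>2 / (norm u)\<^sup>2
        + s0 / (s + 1) * (norm u)\<^sup>2"
    unfolding trace_rank_one_updates u(1)[symmetric] nG nu
    using assms(1) u(2) by (simp add: power_divide field_simps)
  with W show ?thesis
    by simp
qed

lemma rotated_pair_identities:
  fixes a b :: "real^3" and p q :: real
  defines "u \<equiv> p *\<^sub>R a + q *\<^sub>R b" and "v \<equiv> (- q) *\<^sub>R a + p *\<^sub>R b"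
  shows "(norm u)\<^sup>2 + (norm v)\<^sup>2 = (p\<^sup>2 + q\<^sup>2) * ((norm a)\<^sup>2 + (norm b)\<^sup>2)"
    and "(p\<^sup>2 + q\<^sup>2) * ((a \<bullet> u)\<^sup>2 + (b \<bullet> u)\<^sup>2) = ((norm u)\<^sup>2)\<^sup>2 + (u \<bullet> v)\<^sup>2"
    and "cross3 u v = (p\<^sup>2 + q\<^sup>2) *\<^sub>R cross3 a b"
proof -
  show "(norm u)\<^sup>2 + (norm v)\<^sup>2 = (p\<^sup>2 + q\<^sup>2) * ((norm a)\<^sup>2 + (norm b)\<^sup>2)"
    and "(p\<^sup>2 + q\<^sup>2) * ((a \<bullet> u)\<^sup>2 + (b \<bullet> u)\<^sup>2) = ((norm u)\<^sup>2)\<^sup>2 + (u \<bullet> v)\<^sup>2"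
    unfolding u_def v_def power2_norm_eq_inner
    by (simp_all add: inner_add_left inner_add_right inner_commute power2_eq_square algebra_simps)
  show "cross3 u v = (p\<^sup>2 + q\<^sup>2) *\<^sub>R cross3 a b"
    unfolding u_def v_def
    by (simp only: cross_add_left cross_add_right cross_mult_left cross_mult_right cross_refl)
      (simp add: cross_skew[of b a] power2_eq_square algebra_simps)
qed

lemma det_gram_eq_norm_cross:
  fixes F :: "real^2^3"
  shows "det (transpose F ** F) = (norm (cross3 (column 1 F) (column 2 F)))\<^sup>2"
proof -
  have "(transpose F ** F) $ i $ j = column i F \<bullet> column j F" for i j
    by (simp add: matrix_matrix_mult_def transpose_def column_def inner_vec_def)
  then show ?thesis
    using norm_cross_dot[of "column 1 F" "column 2 F"]
    by (simp add: det_2 dot_square_norm inner_commute power_mult_distrib power2_eq_square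
        algebra_simps)
qed

lemma matrix_vector_mult_2:
  fixes F :: "real^2^'m"
  shows "F *v p = p$1 *\<^sub>R column 1 F + p$2 *\<^sub>R column 2 F"
  by (simp add: matrix_mult_sum sum_2 scalar_mult_eq_scaleR)

lemma bvec_eq_cross3:
  assumes "norm (cross3 (column 1 F) (column 2 F)) = 1"
  shows "bvec F = cross3 (column 1 F) (column 2 F)"
  using assms by (simp add: bvec_def)

lemma augment_mult_emb3: "augment F c *v emb3 m = F *v m"
  by (simp add: augment_def emb3_def matrix_vector_mult_def vec_eq_iff sum_2 sum_3)

lemma trace_transpose_augment:
  "trace (transpose (augment F c) ** augment F c)
    = (norm (column 1 F))\<^sup>2 + (norm (column 2 F))\<^sup>2 + (norm c)\<^sup>2"
  unfolding power2_norm_eq_inner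
  by (simp add: trace_def augment_def matrix_matrix_mult_def transpose_def column_def inner_vec_def
      sum_3 power2_eq_square)

lemma norm_vector_mult_augment:
  "(norm (x v* augment F c))\<^sup>2 = (column 1 F \<bullet> x)\<^sup>2 + (column 2 F \<bullet> x)\<^sup>2 + (c \<bullet> x)\<^sup>2"
  unfolding power2_norm_eq_inner
  by (simp add: augment_def vector_matrix_mult_def column_def inner_vec_def sum_3 power2_eq_square
      algebra_simps)

lemma rotated_columns_identities:
  fixes F :: "real^2^3" and m :: "real^2"
  assumes "norm m = 1"
  defines "u \<equiv> F *v m" and "v \<equiv> F *v vector [- m$2, m$1]"
  shows "(norm u)\<^sup>2 * (norm v)\<^sup>2 = (norm (cross3 (column 1 F) (column 2 F)))\<^sup>2 + (u \<bullet> v)\<^sup>2"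
    and "(norm u)\<^sup>2 + (norm v)\<^sup>2 = (norm (column 1 F))\<^sup>2 + (norm (column 2 F))\<^sup>2"
    and "(column 1 F \<bullet> u)\<^sup>2 + (column 2 F \<bullet> u)\<^sup>2 = ((norm u)\<^sup>2)\<^sup>2 + (u \<bullet> v)\<^sup>2"
    and "cross3 (column 1 F) (column 2 F) \<bullet> u = 0"
proof -
  have uv: "u = m$1 *\<^sub>R column 1 F + m$2 *\<^sub>R column 2 F"
    "v = (- m$2) *\<^sub>R column 1 F + m$1 *\<^sub>R column 2 F"
    by (simp_all add: u_def v_def matrix_vector_mult_2)
  have "(m$1)\<^sup>2 + (m$2)\<^sup>2 = 1"
    using assms(1) by (simp add: norm_eq_sqrt_inner inner_vec_def sum_2 power2_eq_square)
  note rotated = rotated_pair_identities[where p = "m$1" and q = "m$2" and a = "column 1 F"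
      and b = "column 2 F", folded uv, unfolded this]
  show "(norm u)\<^sup>2 * (norm v)\<^sup>2 = (norm (cross3 (column 1 F) (column 2 F)))\<^sup>2 + (u \<bullet> v)\<^sup>2"
    using norm_cross_dot[of u v] rotated(3) by (simp add: power_mult_distrib)
  show "(norm u)\<^sup>2 + (norm v)\<^sup>2 = (norm (column 1 F))\<^sup>2 + (norm (column 2 F))\<^sup>2"
    and "(column 1 F \<bullet> u)\<^sup>2 + (column 2 F \<bullet> u)\<^sup>2 = ((norm u)\<^sup>2)\<^sup>2 + (u \<bullet> v)\<^sup>2"
    using rotated(1,2) by simp_all
  show "cross3 (column 1 F) (column 2 F) \<bullet> u = 0"
    by (simp add: uv inner_add_right dot_cross_self)
qed

lemma W3D_augment_eq:
  fixes F :: "real^2^3" and m :: "real^2"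
  assumes "-1 < s" and "-1 < s0" and "norm m = 1" and "det (transpose F ** F) = 1"
  defines "x \<equiv> (norm (F *v m))\<^sup>2" and "y \<equiv> (norm (F *v vector [- m$2, m$1]))\<^sup>2"
  shows "1 \<le> x * y"
    and "W3D s s0 m (augment F (bvec F)) = ((s + 1) / (s0 + 1)) powr (1/3) *
      (1 + ((1 + s0) * x + y) / (s + 1) + s / ((s + 1) * x)) - 3"
proof -
  define u v where "u = F *v m" and "v = F *v vector [- m$2, m$1]"
  define c where "c = cross3 (column 1 F) (column 2 F)"
  note rotated = rotated_columns_identities[OF assms(3), where F = F, folded u_def v_def c_def]
  have "(norm c)\<^sup>2 = 1"
    using assms(4) by (simp add: det_gram_eq_norm_cross c_def)
  then have "norm c = 1"
    using norm_ge_zero[of c] by (auto simp: power2_eq_1_iff)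
  have lagrange: "(u \<bullet> v)\<^sup>2 = x * y - 1"
    using rotated(1) \<open>(norm c)\<^sup>2 = 1\<close> by (simp add: x_def y_def u_def v_def)
  then show "1 \<le> x * y"
    using zero_le_power2[of "u \<bullet> v"] by linarith
  then have "0 < x"
    using zero_le_power2[of "norm u"] by (cases "x = 0") (auto simp: x_def u_def)
  then have "u \<noteq> 0"
    by (auto simp: x_def u_def)
  have "bvec F = c"
    using \<open>norm c = 1\<close> by (simp add: bvec_eq_cross3 c_def)
  have "augment F c *v emb3 m = u"
    by (simp add: augment_mult_emb3 u_def)
  have "trace (transpose (augment F c) ** augment F c) = x + y + 1"
    using rotated(2) \<open>norm c = 1\<close> by (simp add: trace_transpose_augment x_def y_def u_def v_def)
  moreover have "(norm (u v* augment F c))\<^sup>2 = x\<^sup>2 + (u \<bullet> v)\<^sup>2"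
    using rotated(3,4) by (simp add: norm_vector_mult_augment x_def u_def inner_commute)
  moreover have "(norm u)\<^sup>2 = x"
    by (simp add: x_def u_def)
  ultimately have "W3D s s0 m (augment F (bvec F)) = ((s + 1) / (s0 + 1)) powr (1/3) *
      (x + y + 1 - s / (s + 1) * (x\<^sup>2 + (u \<bullet> v)\<^sup>2) / x + s0 / (s + 1) * x) - 3"
    using W3D_eq[OF assms(1,2) \<open>augment F c *v emb3 m = u\<close>[symmetric] \<open>u \<noteq> 0\<close>]
    by (simp add: \<open>bvec F = c\<close>)
  also have "x + y + 1 - s / (s + 1) * (x\<^sup>2 + (u \<bullet> v)\<^sup>2) / x + s0 / (s + 1) * x
      = 1 + ((1 + s0) * x + y) / (s + 1) + s / ((s + 1) * x)"
    using \<open>0 < x\<close> assms(1) unfolding lagrange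
    by (simp add: power2_eq_square divide_simps) (simp add: algebra_simps)
  finally show "W3D s s0 m (augment F (bvec F)) = ((s + 1) / (s0 + 1)) powr (1/3) *
      (1 + ((1 + s0) * x + y) / (s + 1) + s / ((s + 1) * x)) - 3" .
qed

lemma two_div_sqrt_le:
  fixes L x :: real
  assumes "0 < L" and "0 < x"
  shows "2 / sqrt L \<le> x / L\<^sup>2 + L / x"
proof -
  have "(1 / sqrt L)\<^sup>2 = (x / L\<^sup>2) * (L / x)"
    using assms by (simp add: power_divide power2_eq_square)
  from arith_geo_mean[OF this] show ?thesis
    using assms by simp
qed

lemma three_lt_add_two_div_sqrt:
  fixes L :: real
  assumes "0 < L" and "L \<noteq> 1"
  shows "3 < L + 2 / sqrt L"
proof -
  define t where "t = sqrt L"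
  have "0 < t" and "t \<noteq> 1" and L: "L = t\<^sup>2"
    using assms by (auto simp: t_def)
  then have "0 < (t - 1)\<^sup>2 * (t + 2) / t"
    by simp
  also have "\<dots> = t\<^sup>2 + 2 / t - 3"
    using \<open>0 < t\<close> by (simp add: field_simps power2_eq_square)
  finally show ?thesis
    using \<open>0 < t\<close> unfolding t_def[symmetric] L by simp
qed

lemma W3D_augment_ge:
  fixes F :: "real^2^3" and m :: "real^2"
  assumes "-1 < s" and "-1 < s0" and "norm m = 1" and "det (transpose F ** F) = 1"
  defines "L \<equiv> ((s + 1) / (s0 + 1)) powr (1/3)"
  shows "L + 2 / sqrt L - 3 \<le> W3D s s0 m (augment F (bvec F))"
proof -
  define x where "x = (norm (F *v m))\<^sup>2"
  define y where "y = (norm (F *v vector [- m$2, m$1]))\<^sup>2"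
  note closed_form = W3D_augment_eq[OF assms(1-4), folded x_def y_def L_def]
  have "0 < s + 1" and "0 < L"
    using assms(1,2) by (simp_all add: L_def)
  have "L ^ 3 = (s + 1) / (s0 + 1)"
  proof -
    have "L ^ 3 = ((s + 1) / (s0 + 1)) powr (1/3 * real 3)"
      using assms(1,2) by (simp add: L_def powr_power)
    then show ?thesis
      using assms(1,2) by simp
  qed
  have "0 < x"
    using closed_form(1) zero_le_power2[of "norm (F *v m)"]
    by (cases "x = 0") (auto simp: x_def)
  then have "1 / x \<le> y"
    using closed_form(1) by (simp add: field_simps)
  then have "0 \<le> (y - 1 / x) / (s + 1)"
    using assms(1) by simp
  moreover have "x / L ^ 3 = (1 + s0) * x / (s + 1)"
    using assms(2) unfolding \<open>L ^ 3 = (s + 1) / (s0 + 1)\<close> by (simp add: algebra_simps)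
  moreover have "s / ((s + 1) * x) = 1 / x - 1 / x / (s + 1)"
    using \<open>0 < s + 1\<close> \<open>0 < x\<close> by (simp add: divide_simps)
  ultimately have "1 + x / L ^ 3 + 1 / x \<le> 1 + ((1 + s0) * x + y) / (s + 1) + s / ((s + 1) * x)"
    by (simp add: add_divide_distrib diff_divide_distrib)
  then have "L * (1 + x / L ^ 3 + 1 / x) \<le> W3D s s0 m (augment F (bvec F)) + 3"
    using \<open>0 < L\<close> closed_form(2) by simp
  moreover have "L * (1 + x / L ^ 3 + 1 / x) = L + (x / L\<^sup>2 + L / x)"
    using \<open>0 < L\<close> by (simp add: field_simps power2_eq_square power3_eq_cube)
  ultimately show ?thesis
    using two_div_sqrt_le[OF \<open>0 < L\<close> \<open>0 < x\<close>] by linarith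
qed

theorem lemma2p5:
  fixes s s0 :: real and m :: "real^2"
  assumes "-1 < s" and "-1 < s0"
    and "norm m = 1"
    and "((s + 1) / (s0 + 1)) powr (1/3) \<noteq> 1"
  shows "(INF F \<in> {F :: real^2^3. det (transpose F ** F) = 1}.
            W3D s s0 m (augment F (bvec F))) > 0"
proof -
  define L where "L = ((s + 1) / (s0 + 1)) powr (1/3)"
  have "0 < L"
    using assms(1,2) by (simp add: L_def)
  define F0 :: "real^2^3" where "F0 = (\<chi> i j. if i = 1 \<and> j = 1 \<or> i = 2 \<and> j = 2 then 1 else 0)"
  have "det (transpose F0 ** F0) = 1"
    by (simp add: F0_def det_2 matrix_matrix_mult_def transpose_def sum_3)
  then have "{F :: real^2^3. det (transpose F ** F) = 1} \<noteq> {}"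
    by blast
  then have "L + 2 / sqrt L - 3 \<le> (INF F \<in> {F :: real^2^3. det (transpose F ** F) = 1}.
      W3D s s0 m (augment F (bvec F)))"
    by (rule cINF_greatest) (use W3D_augment_ge[OF assms(1-3)] in \<open>simp add: L_def\<close>)
  moreover have "3 < L + 2 / sqrt L"
    using three_lt_add_two_div_sqrt[OF \<open>0 < L\<close>] assms(4) by (simp add: L_def)
  ultimately show ?thesis
    by linarith
qed

end
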